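(* Let $\Gamma=(a_1,\dots,a_m)\in\mathbb{Z}^m$ be a multiset of integers with $a_i=1$ for some $i$. For $n\ge1$ let $\Gamma_n=(k_1,\dots,k_m)$ with $k_i=a_i \bmod n$, viewed as a multiset in $\mathbb{Z}_n$. Then there exists a positive integer $N=N(\Gamma)$ such that for every $n>N$ and every $v\in\mathbb{Z}_n$: if $v\Gamma_n=\Gamma_n$ as multisets, then $v\in\{-1,0,1\}$ (in $\mathbb{Z}_n$).
   Context: For $v\in\mathbb{Z}_n$, $v\Gamma_n$ denotes the multiset $(vk_1,\dots,vk_m)$ with multiplication in $\mathbb{Z}_n$. *)

theory Defs
  imports "HOL-Library.Multiset" "HOL-Number_Theory.Cong"
begin

definition reduce_mset :: "int \<Rightarrow> int multiset \<Rightarrow> int multiset" where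
  "reduce_mset n \<Gamma> = image_mset (\<lambda>a. a mod n) \<Gamma>"

definition scale_mset :: "int \<Rightarrow> int \<Rightarrow> int multiset \<Rightarrow> int multiset" where
  "scale_mset n v M = image_mset (\<lambda>k. (v * k) mod n) M"

end

theory Submission
  imports Defs
begin

text \<open>If \<open>v\<Gamma>\<^sub>n = \<Gamma>\<^sub>n\<close>, the residues of \<open>\<Gamma>\<close> are closed under multiplication by \<open>v\<close>, so
  together with \<open>1\<close> they contain every power \<open>v\<^sup>k\<close>. Choosing \<open>a \<in> \<Gamma>\<close> with \<open>a \<equiv> v\<close>, once
  \<open>n\<close> exceeds \<open>B\<^sup>2 + B\<close> (\<open>B\<close> bounding \<open>|\<Gamma>|\<close>) a residue congruence between integers of size
  at most \<open>B\<^sup>2\<close> and \<open>B\<close> is an equality, so inductively every integer power \<open>a\<^sup>k\<close> lies in \<open>\<Gamma>\<close>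
  itself. An integer with only finitely many distinct powers is \<open>-1\<close>, \<open>0\<close> or \<open>1\<close>.\<close>

lemma int_eq_if_mod_eq_abs_diff_less:
  fixes x y n :: int
  assumes "x mod n = y mod n" and "\<bar>x - y\<bar> < n"
  shows "x = y"
proof (rule ccontr)
  assume "x \<noteq> y"
  have "n dvd \<bar>x - y\<bar>" using assms(1) by (simp add: mod_eq_dvd_iff)
  then have "\<bar>n\<bar> \<le> \<bar>x - y\<bar>" using \<open>x \<noteq> y\<close> by (metis abs_abs dvd_imp_le_int eq_iff_diff_eq_0 abs_0_eq)
  with assms(2) show False by simp
qed

lemma abs_le_one_if_finite_range_power:
  fixes a :: int
  assumes "finite (range (\<lambda>k::nat. a ^ k))"
  shows "\<bar>a\<bar> \<le> 1"
proof (rule ccontr)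
  assume "\<not> \<bar>a\<bar> \<le> 1"
  then have "inj (\<lambda>k::nat. a ^ k)"
    by (intro injI) (metis power_abs power_inject_exp not_le)
  with assms show False
    using finite_imageD by blast
qed

lemma power_mod_mem_reduce_mset_if_scale_invariant:
  fixes \<Gamma> :: "int multiset" and n v :: int
  assumes "1 \<in># \<Gamma>" and "1 < n"
    and "scale_mset n v (reduce_mset n \<Gamma>) = reduce_mset n \<Gamma>"
  shows "v ^ k mod n \<in># reduce_mset n \<Gamma>"
proof (induction k)
  case 0
  show ?case using assms(1,2) by (force simp: reduce_mset_def)
next
  case (Suc k)
  then have "v * (v ^ k mod n) mod n \<in># scale_mset n v (reduce_mset n \<Gamma>)"
    unfolding scale_mset_def by simp
  then show ?case using assms(3) by (simp add: mod_mult_right_eq)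
qed

lemma power_mem_if_power_mod_mem_reduce_mset:
  fixes \<Gamma> :: "int multiset" and a n B :: int
  assumes "1 \<in># \<Gamma>" and bound: "\<forall>x\<in>#\<Gamma>. \<bar>x\<bar> \<le> B" and "B * B + B < n"
    and "a \<in># \<Gamma>" and powers: "\<forall>k. a ^ k mod n \<in># reduce_mset n \<Gamma>"
  shows "a ^ k \<in># \<Gamma>"
proof (induction k)
  case 0
  show ?case using assms(1) by simp
next
  case (Suc k)
  obtain b where b: "b \<in># \<Gamma>" "a ^ Suc k mod n = b mod n"
    using powers[rule_format, of "Suc k"] unfolding reduce_mset_def by auto
  have "\<bar>a ^ Suc k\<bar> = \<bar>a\<bar> * \<bar>a ^ k\<bar>" by (simp add: abs_mult)
  also have "\<dots> \<le> B * B"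
  proof (rule mult_mono)
    show "\<bar>a\<bar> \<le> B" "\<bar>a ^ k\<bar> \<le> B" using bound \<open>a \<in># \<Gamma>\<close> Suc.IH by simp_all
    then show "0 \<le> B" by linarith
  qed simp
  finally have "\<bar>a ^ Suc k - b\<bar> < n" using bound b(1) \<open>B * B + B < n\<close> by fastforce
  with b show ?case using int_eq_if_mod_eq_abs_diff_less by metis
qed

theorem lemma3:
  fixes \<Gamma> :: "int multiset"
  assumes "1 \<in># \<Gamma>"
  shows "\<exists>N::int. N > 0 \<and>
           (\<forall>n::int. n > N \<longrightarrow>
              (\<forall>v::int. 0 \<le> v \<and> v < n \<longrightarrow>
                 scale_mset n v (reduce_mset n \<Gamma>) = reduce_mset n \<Gamma> \<longrightarrow>
                 [v = -1] (mod n) \<or> [v = 0] (mod n) \<or> [v = 1] (mod n)))"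
proof -
  define B where "B = Max (abs ` set_mset \<Gamma>)"
  have bound: "\<forall>x\<in>#\<Gamma>. \<bar>x\<bar> \<le> B" unfolding B_def by simp
  have "1 \<le> B" using bound assms by fastforce
  then have "B \<le> B * B" by simp
  show ?thesis
  proof (intro exI[of _ "B * B + B"] conjI allI impI)
    show "0 < B * B + B" using \<open>1 \<le> B\<close> \<open>B \<le> B * B\<close> by linarith
    fix n v :: int
    assume "B * B + B < n" and "scale_mset n v (reduce_mset n \<Gamma>) = reduce_mset n \<Gamma>"
    moreover have "1 < n" using \<open>B * B + B < n\<close> \<open>1 \<le> B\<close> \<open>B \<le> B * B\<close> by linarith
    ultimately have v_powers: "\<forall>k. v ^ k mod n \<in># reduce_mset n \<Gamma>"
      using power_mod_mem_reduce_mset_if_scale_invariant assms by blast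
    then obtain a where a: "a \<in># \<Gamma>" "v mod n = a mod n"
      unfolding reduce_mset_def by (metis image_iff power_one_right set_image_mset)
    then have "\<forall>k. a ^ k mod n \<in># reduce_mset n \<Gamma>"
      using v_powers by (metis power_mod)
    then have "range (\<lambda>k. a ^ k) \<subseteq> set_mset \<Gamma>"
      using power_mem_if_power_mod_mem_reduce_mset assms bound \<open>B * B + B < n\<close> a(1) by blast
    then have "\<bar>a\<bar> \<le> 1"
      using abs_le_one_if_finite_range_power finite_subset by blast
    then have "a = -1 \<or> a = 0 \<or> a = 1" by auto
    then show "[v = -1] (mod n) \<or> [v = 0] (mod n) \<or> [v = 1] (mod n)"
      using a(2) unfolding cong_def by auto
  qed
qed

end
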